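(* Let $X_1,X_2,\dots$ be real random variables on a probability space with $\mathbb E X_n=0$, and suppose there are constants $M<\infty$, $C<\infty$ and $0\le\gamma<2$ such that $\|X_n\|_\infty\le M$ and $\operatorname{Var}\big(\sum_{k=1}^nX_k\big)\le Cn^\gamma$ for all $n$. Then for every $\eta>\frac{\gamma+1}{3}$, $\sum_{k=1}^nX_k=O(n^\eta)$ almost surely.
   Context: No independence is assumed among the $X_n$. *)

theory Defs
  imports "HOL-Probability.Probability" "HOL-Library.Landau_Symbols"
begin

end

theory Submission
  imports Defs
begin

text \<open>
  Fix \<open>p \<ge> 1\<close> and watch the partial sums \<open>S\<close> only at the sparse times
  \<open>n_k = \<lceil>k^p\<rceil>\<close>. Chebyshev gives \<open>P(|S n_k| > n_k^(1-1/p)) \<le> C k^(p(\<gamma>-2)+2)\<close>,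
  which is summable once \<open>p(2 - \<gamma>) > 3\<close>; so by Borel-Cantelli, almost surely
  \<open>|S n_k| \<le> n_k^(1-1/p)\<close> for all large \<open>k\<close>. Between consecutive sparse times \<open>S\<close>
  moves by at most \<open>B\<close> per step, and the gap \<open>n_(k+1) - n_k \<approx> p k^(p-1)\<close> is again of
  order \<open>n^(1-1/p)\<close>. Hence \<open>S n = O(n^(1-1/p))\<close>, and such a \<open>p\<close> with \<open>1 - 1/p \<le> \<eta>\<close>
  exists precisely because \<open>\<eta> > (\<gamma> + 1)/3\<close>.
\<close>

lemma powr_succ_diff_le:
  fixes k p :: real
  assumes "1 \<le> p" "0 < k"
  shows "(k + 1) powr p - k powr p \<le> p * (k + 1) powr (p - 1)"
proof -
  have "\<exists>z. k < z \<and> z < k + 1 \<and> (k + 1) powr p - k powr p = (k + 1 - k) * (p * z powr (p - 1))"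
    by (rule MVT2) (use assms in \<open>auto intro!: has_real_derivative_powr\<close>)
  then obtain z where z: "k < z" "z < k + 1" "(k + 1) powr p - k powr p = p * z powr (p - 1)"
    by auto
  have "z powr (p - 1) \<le> (k + 1) powr (p - 1)"
    using z assms by (intro powr_mono2) auto
  with z assms show ?thesis by (simp add: mult_left_mono)
qed

definition powr_ceiling_seq :: "real \<Rightarrow> nat \<Rightarrow> nat" where
  "powr_ceiling_seq p k = nat \<lceil>real k powr p\<rceil>"

lemma powr_ceiling_seq_ge: "real k powr p \<le> real (powr_ceiling_seq p k)"
proof -
  have "0 \<le> \<lceil>real k powr p\<rceil>"
    using powr_ge_zero[of "real k" p] by linarith
  then show ?thesis
    using le_of_int_ceiling[of "real k powr p"] unfolding powr_ceiling_seq_def by simp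
qed

lemma powr_ceiling_seq_le_iff: "powr_ceiling_seq p k \<le> n \<longleftrightarrow> real k powr p \<le> real n"
  unfolding powr_ceiling_seq_def by (simp add: nat_le_iff ceiling_le_iff)

lemma powr_ceiling_seq_close_below:
  assumes "1 \<le> p" "1 \<le> n" "powr_ceiling_seq p K \<le> n"
  obtains k where "K \<le> k" "powr_ceiling_seq p k \<le> n"
    "real (n - powr_ceiling_seq p k) \<le> p * 2 powr (p - 1) * real n powr (1 - 1 / p)"
proof
  define r where "r = real n powr (1 / p)"
  define k where "k = nat \<lfloor>r\<rfloor>"
  have r1: "1 \<le> r"
    unfolding r_def using assms by (simp add: ge_one_powr_ge_zero)
  have kr: "real k \<le> r" "r < real k + 1"
    unfolding k_def using r1 by linarith+
  have k0: "0 < real k"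
    using kr r1 by linarith
  have rp: "r powr p = real n"
    unfolding r_def using assms by (simp add: powr_powr)
  have "real K = (real K powr p) powr (1 / p)"
    using assms by (simp add: powr_powr)
  also have "\<dots> \<le> r"
    unfolding r_def using assms powr_ceiling_seq_ge[of K p]
    by (intro powr_mono2) (auto simp: powr_ceiling_seq_le_iff)
  finally show "K \<le> k"
    unfolding k_def by (simp add: le_nat_floor)
  have "real k powr p \<le> real n"
    using kr rp assms by (metis of_nat_0_le_iff powr_mono2 order.trans zero_le_one)
  then show le: "powr_ceiling_seq p k \<le> n"
    by (simp add: powr_ceiling_seq_le_iff)
  have "real (n - powr_ceiling_seq p k) \<le> (real k + 1) powr p - real k powr p"
    using le powr_ceiling_seq_ge[of k p] powr_less_mono2[of p r "real k + 1"] kr rp r1 assms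
    by simp
  also have "\<dots> \<le> p * (real k + 1) powr (p - 1)"
    using assms k0 by (intro powr_succ_diff_le) auto
  also have "\<dots> \<le> p * (2 * r) powr (p - 1)"
    using kr k0 r1 assms by (intro mult_left_mono powr_mono2) auto
  also have "\<dots> = p * 2 powr (p - 1) * real n powr (1 - 1 / p)"
    unfolding r_def using assms by (simp add: powr_mult powr_powr field_simps)
  finally show "real (n - powr_ceiling_seq p k) \<le> p * 2 powr (p - 1) * real n powr (1 - 1 / p)" .
qed

lemma abs_sum_diff_le:
  fixes f :: "nat \<Rightarrow> real"
  assumes "\<And>i. 1 \<le> i \<Longrightarrow> \<bar>f i\<bar> \<le> B" "m \<le> n"
  shows "\<bar>(\<Sum>k=1..n. f k) - (\<Sum>k=1..m. f k)\<bar> \<le> real (n - m) * B"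
proof -
  have "{1..n} = {1..m} \<union> {m+1..n}"
    using assms(2) by auto
  then have "(\<Sum>k=1..n. f k) - (\<Sum>k=1..m. f k) = (\<Sum>k=m+1..n. f k)"
    by (simp add: sum.union_disjoint)
  also have "\<bar>\<dots>\<bar> \<le> (\<Sum>k=m+1..n. \<bar>f k\<bar>)"
    by (rule sum_abs)
  also have "\<dots> \<le> real (card {m+1..n}) * B"
    by (rule sum_bounded_above) (use assms(1) in auto)
  finally show ?thesis by simp
qed

lemma bigo_powr_of_powr_ceiling_seq_bound:
  fixes S :: "nat \<Rightarrow> real"
  assumes p: "1 \<le> p" and \<eta>: "1 - 1 / p \<le> \<eta>"
    and lipschitz: "\<And>m n. m \<le> n \<Longrightarrow> \<bar>S n - S m\<bar> \<le> real (n - m) * L"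
    and subseq: "eventually (\<lambda>k. \<bar>S (powr_ceiling_seq p k)\<bar>
                   \<le> real (powr_ceiling_seq p k) powr (1 - 1 / p)) sequentially"
  shows "S \<in> O(\<lambda>n. real n powr \<eta>)"
proof -
  obtain K where K: "\<And>k. K \<le> k \<Longrightarrow>
      \<bar>S (powr_ceiling_seq p k)\<bar> \<le> real (powr_ceiling_seq p k) powr (1 - 1 / p)"
    using subseq unfolding eventually_sequentially by blast
  define D where "D = p * 2 powr (p - 1)"
  have "\<bar>S n\<bar> \<le> (1 + D * \<bar>L\<bar>) * real n powr \<eta>"
    if n1: "1 \<le> n" and Kn: "powr_ceiling_seq p K \<le> n" for n
  proof -
    obtain k where "K \<le> k" and mn: "powr_ceiling_seq p k \<le> n"
      and gap: "real (n - powr_ceiling_seq p k) \<le> D * real n powr (1 - 1 / p)"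
      using powr_ceiling_seq_close_below[OF p n1 Kn] unfolding D_def by blast
    define m where "m = powr_ceiling_seq p k"
    from \<open>K \<le> k\<close> have "\<bar>S m\<bar> \<le> real m powr (1 - 1 / p)"
      unfolding m_def by (rule K)
    also have "\<dots> \<le> real n powr (1 - 1 / p)"
      using mn p unfolding m_def by (intro powr_mono2) auto
    finally have Sm: "\<bar>S m\<bar> \<le> real n powr (1 - 1 / p)" .
    have "\<bar>S n - S m\<bar> \<le> real (n - m) * \<bar>L\<bar>"
      using lipschitz[of m n] mn unfolding m_def
      by (smt (verit) mult_left_mono of_nat_0_le_iff abs_ge_self)
    also have "\<dots> \<le> D * \<bar>L\<bar> * real n powr (1 - 1 / p)"
      using mult_right_mono[OF gap, of "\<bar>L\<bar>"] unfolding m_def by (simp add: mult_ac)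
    finally have "\<bar>S n\<bar> \<le> (1 + D * \<bar>L\<bar>) * real n powr (1 - 1 / p)"
      using Sm by (simp add: algebra_simps)
    also have "\<dots> \<le> (1 + D * \<bar>L\<bar>) * real n powr \<eta>"
      using n1 \<eta> p unfolding D_def by (intro mult_left_mono powr_mono) auto
    finally show ?thesis .
  qed
  then show ?thesis
    by (intro bigoI[where c = "1 + D * \<bar>L\<bar>"])
      (auto simp: eventually_at_top_linorder intro!: exI[of _ "max 1 (powr_ceiling_seq p K)"])
qed

lemma (in prob_space) AE_eventually_powr_ceiling_seq_bound:
  fixes S :: "nat \<Rightarrow> 'a \<Rightarrow> real"
  assumes [measurable]: "\<And>n. S n \<in> borel_measurable M"
    and square_integrable: "\<And>n. integrable M (\<lambda>x. S n x ^ 2)"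
    and mean0: "\<And>n. 1 \<le> n \<Longrightarrow> expectation (S n) = 0"
    and variance: "\<And>n. 1 \<le> n \<Longrightarrow> variance (S n) \<le> C * real n powr \<gamma>"
    and p: "1 \<le> p" "1 < p * (2 * \<eta> - \<gamma>)"
  shows "AE x in M. eventually (\<lambda>k. \<bar>S (powr_ceiling_seq p k) x\<bar>
                         \<le> real (powr_ceiling_seq p k) powr \<eta>) sequentially"
proof -
  define A where
    "A k = {x\<in>space M. real (powr_ceiling_seq p k) powr \<eta> < \<bar>S (powr_ceiling_seq p k) x\<bar>}" for k
  have A_sets: "A k \<in> sets M" for k
    unfolding A_def by measurable
  have "0 \<le> variance (S 1)"
    by (rule integral_nonneg_AE) auto
  then have C: "0 \<le> C"
    using order_trans[OF _ variance[of 1]] by simp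
  have \<gamma>: "\<gamma> - 2 * \<eta> \<le> 0"
    using p zero_less_mult_pos[of p "2 * \<eta> - \<gamma>"] by linarith
  have A_bound: "prob (A k) \<le> C * real k powr (p * (\<gamma> - 2 * \<eta>))" if "1 \<le> k" for k
  proof -
    define m where "m = powr_ceiling_seq p k"
    have kp: "1 \<le> real k powr p"
      using that p by (simp add: ge_one_powr_ge_zero)
    have km: "real k powr p \<le> real m"
      unfolding m_def by (rule powr_ceiling_seq_ge)
    then have m1: "1 \<le> m" using kp by linarith
    have "prob (A k) \<le> prob {x\<in>space M. real m powr \<eta> \<le> \<bar>S m x - expectation (S m)\<bar>}"
      unfolding A_def m_def using mean0[OF m1[unfolded m_def]]
      by (intro finite_measure_mono) (auto simp: m_def)
    also have "\<dots> \<le> variance (S m) / (real m powr \<eta>)\<^sup>2"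
      using m1 by (intro Chebyshev_inequality square_integrable) auto
    also have "\<dots> \<le> C * real m powr \<gamma> / (real m powr \<eta>)\<^sup>2"
      using variance[OF m1] by (rule divide_right_mono) simp
    also have "(real m powr \<eta>)\<^sup>2 = real m powr (2 * \<eta>)"
      by (simp add: power2_eq_square powr_add[symmetric])
    also have "C * real m powr \<gamma> / real m powr (2 * \<eta>) = C * real m powr (\<gamma> - 2 * \<eta>)"
      by (simp add: powr_diff)
    also have "\<dots> \<le> C * (real k powr p) powr (\<gamma> - 2 * \<eta>)"
      using C \<gamma> kp km that by (intro mult_left_mono powr_mono2') auto
    also have "\<dots> = C * real k powr (p * (\<gamma> - 2 * \<eta>))"
      by (simp add: powr_powr)
    finally show ?thesis .
  qed
  have "p * (\<gamma> - 2 * \<eta>) < -1"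
    using p by (simp add: algebra_simps)
  then have "summable (\<lambda>k. C * real k powr (p * (\<gamma> - 2 * \<eta>)))"
    by (simp add: summable_real_powr_iff)
  then have "summable (\<lambda>k. prob (A k))"
    by (rule summable_comparison_test'[where N = 1]) (simp add: A_bound)
  then have "AE x in M. eventually (\<lambda>k. x \<in> space M - A k) sequentially"
    using A_sets by (intro borel_cantelli_AE1) (auto simp: less_top[symmetric])
  then show ?thesis
    by eventually_elim (erule eventually_mono, auto simp: A_def)
qed

lemma AE_abs_partial_sum_diff_le:
  fixes X :: "nat \<Rightarrow> 'a \<Rightarrow> real"
  assumes "\<And>n. 1 \<le> n \<Longrightarrow> AE x in M. \<bar>X n x\<bar> \<le> B"
  shows "AE x in M. \<forall>m n. m \<le> n \<longrightarrow>
           \<bar>(\<Sum>k=1..n. X k x) - (\<Sum>k=1..m. X k x)\<bar> \<le> real (n - m) * B"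
proof -
  have "AE x in M. \<forall>i. 1 \<le> i \<longrightarrow> \<bar>X i x\<bar> \<le> B"
    unfolding AE_all_countable using assms by (auto intro: AE_mp)
  then show ?thesis
    by eventually_elim (blast intro: abs_sum_diff_le)
qed

lemma (in prob_space) integrable_partial_sum_square:
  fixes X :: "nat \<Rightarrow> 'a \<Rightarrow> real"
  assumes "\<And>n. 1 \<le> n \<Longrightarrow> X n \<in> borel_measurable M"
    and "\<And>n. 1 \<le> n \<Longrightarrow> AE x in M. \<bar>X n x\<bar> \<le> B"
  shows "integrable M (\<lambda>x. (\<Sum>k=1..n. X k x) ^ 2)"
proof (rule integrable_const_bound)
  have "AE x in M. \<forall>m n. m \<le> n \<longrightarrow>
          \<bar>(\<Sum>k=1..n. X k x) - (\<Sum>k=1..m. X k x)\<bar> \<le> real (n - m) * B"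
    using assms(2) by (rule AE_abs_partial_sum_diff_le)
  then show "AE x in M. norm ((\<Sum>k=1..n. X k x) ^ 2) \<le> (real n * B)\<^sup>2"
  proof eventually_elim
    case (elim x)
    then have "\<bar>\<Sum>k=1..n. X k x\<bar> \<le> real n * B"
      using elim[rule_format, of 0 n] by simp
    then show ?case
      using abs_ge_self[of "real n * B"] by (simp add: abs_le_square_iff[symmetric])
  qed
qed (use assms(1) in simp)

lemma (in prob_space) expectation_partial_sum_eq_0:
  fixes X :: "nat \<Rightarrow> 'a \<Rightarrow> real"
  assumes "\<And>n. 1 \<le> n \<Longrightarrow> X n \<in> borel_measurable M"
    and "\<And>n. 1 \<le> n \<Longrightarrow> AE x in M. \<bar>X n x\<bar> \<le> B"
    and "\<And>n. 1 \<le> n \<Longrightarrow> expectation (X n) = 0"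
  shows "expectation (\<lambda>x. \<Sum>k=1..n. X k x) = 0"
proof -
  have "integrable M (X i)" if "1 \<le> i" for i
    using assms(1,2)[OF that] by (intro integrable_const_bound[where B = B]) auto
  then show ?thesis
    using assms(3) by (subst Bochner_Integration.integral_sum) auto
qed

lemma exists_subsequence_exponent:
  fixes \<gamma> \<eta> :: real
  assumes "0 \<le> \<gamma>" "\<gamma> < 2" "(\<gamma> + 1) / 3 < \<eta>"
  obtains p where "1 \<le> p" "1 < p * (2 * (1 - 1 / p) - \<gamma>)" "1 - 1 / p \<le> \<eta>"
proof -
  define q where "q = max (1 - \<eta>) ((2 - \<gamma>) / 6)"
  have "0 < q" "q \<le> 1" "1 - \<eta> \<le> q" "3 * q < 2 - \<gamma>"
    using assms unfolding q_def by (auto simp: max_def)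
  then have "1 \<le> 1 / q" "1 < 1 / q * (2 * (1 - 1 / (1 / q)) - \<gamma>)" "1 - 1 / (1 / q) \<le> \<eta>"
    by (auto simp: field_simps)
  then show ?thesis ..
qed

theorem mainTheorem8:
  fixes M :: "'a measure" and X :: "nat \<Rightarrow> 'a \<Rightarrow> real"
    and B C \<gamma> \<eta> :: real
  assumes "prob_space M"
    and rv: "\<And>n. n \<ge> 1 \<Longrightarrow> X n \<in> borel_measurable M"
    and mean0: "\<And>n. n \<ge> 1 \<Longrightarrow> prob_space.expectation M (X n) = 0"
    and bdd: "\<And>n. n \<ge> 1 \<Longrightarrow> (AE x in M. \<bar>X n x\<bar> \<le> B)"
    and var: "\<And>n. n \<ge> 1 \<Longrightarrow>
       prob_space.variance M (\<lambda>x. \<Sum>k=1..n. X k x) \<le> C * real n powr \<gamma>"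
    and "0 \<le> \<gamma>" and "\<gamma> < 2"
    and "\<eta> > (\<gamma> + 1) / 3"
  shows "AE x in M. (\<lambda>n. \<Sum>k=1..n. X k x) \<in> O(\<lambda>n. real n powr \<eta>)"
proof -
  interpret prob_space M by fact
  define S where "S n x = (\<Sum>k=1..n. X k x)" for n x
  have S_measurable[measurable]: "S n \<in> borel_measurable M" for n
    unfolding S_def using rv by measurable
  obtain p where p: "1 \<le> p" "1 < p * (2 * (1 - 1 / p) - \<gamma>)" "1 - 1 / p \<le> \<eta>"
    using exists_subsequence_exponent assms(6-8) by blast
  have "AE x in M. eventually (\<lambda>k. \<bar>S (powr_ceiling_seq p k) x\<bar>
                       \<le> real (powr_ceiling_seq p k) powr (1 - 1 / p)) sequentially"
    using integrable_partial_sum_square[where X = X, OF rv bdd]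
      expectation_partial_sum_eq_0[where X = X, OF rv bdd mean0] var
    unfolding S_def[symmetric]
    by (intro AE_eventually_powr_ceiling_seq_bound[OF S_measurable _ _ _ p(1,2)])
  moreover have "AE x in M. \<forall>m n. m \<le> n \<longrightarrow> \<bar>S n x - S m x\<bar> \<le> real (n - m) * B"
    using bdd unfolding S_def by (rule AE_abs_partial_sum_diff_le)
  ultimately have "AE x in M. (\<lambda>n. S n x) \<in> O(\<lambda>n. real n powr \<eta>)"
    by eventually_elim (rule bigo_powr_of_powr_ceiling_seq_bound[OF p(1,3)], auto)
  then show ?thesis
    by (simp add: S_def)
qed

end
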